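(* Let $G$ be a Lie group, $V_0,V_1$ vector spaces, $F_1:G\to GL(V_0)\times GL(V_1)$ a Lie group homomorphism, and let $\mathrm{Hom}(V_0,V_1)$ be a $G$-module via $g\cdot A=F_1(g)\circ A\circ F_1(g)^{-1}$. Let $\overline{F_2}:G\times G\to\mathrm{Hom}(V_0,V_1)$ and set $F_2(g_1,g_2)=\overline{F_2}(g_1,g_2)\circ F_1(g_1g_2)$ and $\widetilde{F_2}((g_1,\xi_1),(g_2,\xi_2),(g_3,\xi_3))=F_2(g_1,g_2)(\xi_3)$ on $G\ltimes V_0$. If $\overline{F_2}=\mathrm d\alpha$ for a smooth $\alpha:G\to\mathrm{Hom}(V_0,V_1)$, then $\widetilde{F_2}=\mathrm d\beta$, where $\beta((g_1,\xi_1),(g_2,\xi_2))=\alpha(g_1)F_1(g_1)(\xi_2)$.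
   Context: $G\ltimes V_0$ is the group $(g_1,\xi_1)(g_2,\xi_2)=(g_1g_2,\xi_1+F_1(g_1)\xi_2)$, acting on $V_1$ by $(g,\xi)\cdot m=F_1(g)m$. $\mathrm d$ denotes the group-cohomology differential: $(\mathrm d\alpha)(g_1,g_2)=g_1\cdot\alpha(g_2)-\alpha(g_1g_2)+\alpha(g_1)$ for 1-cochains, and $(\mathrm d\beta)(a,b,c)=a\cdot\beta(b,c)-\beta(ab,c)+\beta(a,bc)-\beta(a,b)$ for 2-cochains. *)

theory Defs
  imports Complex_Main "HOL-Algebra.Group" "HOL-Library.Function_Algebras"
begin

text \<open>Group-cohomology differentials for a group with multiplication mul acting on an
  abelian group via act (cochains are plain functions; equalities are asserted on carriers).\<close>

definition cobound1 :: "('g \<Rightarrow> 'g \<Rightarrow> 'g) \<Rightarrow> ('g \<Rightarrow> 'm \<Rightarrow> 'm) \<Rightarrow> ('g \<Rightarrow> 'm::ab_group_add) \<Rightarrow> 'g \<Rightarrow> 'g \<Rightarrow> 'm" where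
  "cobound1 mul act a g1 g2 = act g1 (a g2) - a (mul g1 g2) + a g1"

definition cobound2 :: "('g \<Rightarrow> 'g \<Rightarrow> 'g) \<Rightarrow> ('g \<Rightarrow> 'm \<Rightarrow> 'm) \<Rightarrow> ('g \<Rightarrow> 'g \<Rightarrow> 'm::ab_group_add) \<Rightarrow> 'g \<Rightarrow> 'g \<Rightarrow> 'g \<Rightarrow> 'm" where
  "cobound2 mul act b x y z = act x (b y z) - b (mul x y) z + b x (mul y z) - b x y"

definition hom_act :: "('g \<Rightarrow> 'v0 \<Rightarrow> 'v0) \<Rightarrow> ('g \<Rightarrow> 'v1 \<Rightarrow> 'v1) \<Rightarrow> 'g \<Rightarrow> ('v0 \<Rightarrow> 'v1) \<Rightarrow> ('v0 \<Rightarrow> 'v1)" where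
  "hom_act F10 F11 g A = F11 g \<circ> A \<circ> inv_into UNIV (F10 g)"

definition sd_mult :: "('g, 'b) monoid_scheme \<Rightarrow> ('g \<Rightarrow> 'v0::plus \<Rightarrow> 'v0) \<Rightarrow> 'g \<times> 'v0 \<Rightarrow> 'g \<times> 'v0 \<Rightarrow> 'g \<times> 'v0" where
  "sd_mult G F10 p q = (fst p \<otimes>\<^bsub>G\<^esub> fst q, snd p + F10 (fst p) (snd q))"

definition sd_act :: "('g \<Rightarrow> 'v1 \<Rightarrow> 'v1) \<Rightarrow> 'g \<times> 'v0 \<Rightarrow> 'v1 \<Rightarrow> 'v1" where
  "sd_act F11 p m = F11 (fst p) m"

definition F2 :: "('g, 'b) monoid_scheme \<Rightarrow> ('g \<Rightarrow> 'v0 \<Rightarrow> 'v0) \<Rightarrow> ('g \<Rightarrow> 'g \<Rightarrow> 'v0 \<Rightarrow> 'v1) \<Rightarrow> 'g \<Rightarrow> 'g \<Rightarrow> 'v0 \<Rightarrow> 'v1" where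
  "F2 G F10 F2bar g1 g2 = F2bar g1 g2 \<circ> F10 (g1 \<otimes>\<^bsub>G\<^esub> g2)"

definition F2tilde :: "('g, 'b) monoid_scheme \<Rightarrow> ('g \<Rightarrow> 'v0 \<Rightarrow> 'v0) \<Rightarrow> ('g \<Rightarrow> 'g \<Rightarrow> 'v0 \<Rightarrow> 'v1) \<Rightarrow> 'g \<times> 'v0 \<Rightarrow> 'g \<times> 'v0 \<Rightarrow> 'g \<times> 'v0 \<Rightarrow> 'v1" where
  "F2tilde G F10 F2bar p q r = F2 G F10 F2bar (fst p) (fst q) (snd r)"

definition beta :: "('g \<Rightarrow> 'v0 \<Rightarrow> 'v1) \<Rightarrow> ('g \<Rightarrow> 'v0 \<Rightarrow> 'v0) \<Rightarrow> 'g \<times> 'v0 \<Rightarrow> 'g \<times> 'v0 \<Rightarrow> 'v1" where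
  "beta \<alpha> F10 p q = \<alpha> (fst p) (F10 (fst p) (snd q))"

end

theory Submission
  imports Defs
begin

text \<open>Write \<open>p = (g\<^sub>1,\<xi>\<^sub>1)\<close>, \<open>q = (g\<^sub>2,\<xi>\<^sub>2)\<close>, \<open>r = (g\<^sub>3,\<xi>\<^sub>3)\<close>. Since \<open>\<alpha>(g\<^sub>1)\<close> and \<open>F\<^sub>1(g\<^sub>1)\<close> are additive,
  the \<open>\<xi>\<^sub>2\<close>-contributions of \<open>\<beta>(p, qr)\<close> and \<open>\<beta>(p, q)\<close> cancel in \<open>d\<beta>(p,q,r)\<close>, and what remains
  is \<open>(d\<alpha>)(g\<^sub>1,g\<^sub>2)\<close> evaluated at \<open>F\<^sub>1(g\<^sub>1g\<^sub>2)\<xi>\<^sub>3\<close>: the twisted action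
  \<open>F\<^sub>1(g\<^sub>1) \<circ> \<alpha>(g\<^sub>2) \<circ> F\<^sub>1(g\<^sub>1)\<^sup>-\<^sup>1\<close> on \<open>F\<^sub>1(g\<^sub>1)F\<^sub>1(g\<^sub>2)\<xi>\<^sub>3\<close> is just \<open>F\<^sub>1(g\<^sub>1)\<alpha>(g\<^sub>2)F\<^sub>1(g\<^sub>2)\<xi>\<^sub>3\<close>.\<close>

lemma hom_act_apply:
  assumes "inj (F10 g)"
  shows "hom_act F10 F11 g A (F10 g x) = F11 g (A x)"
  using assms by (simp add: hom_act_def)

lemma cobound2_beta_sd:
  fixes F10 :: "'g \<Rightarrow> 'v0::ab_group_add \<Rightarrow> 'v0"
    and \<alpha> :: "'g \<Rightarrow> 'v0 \<Rightarrow> 'v1::ab_group_add"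
  assumes "additive (F10 g1)" and "inj (F10 g1)" and "additive (\<alpha> g1)"
    and "F10 (g1 \<otimes>\<^bsub>G\<^esub> g2) = F10 g1 \<circ> F10 g2"
  shows "cobound2 (sd_mult G F10) (sd_act F11) (beta \<alpha> F10) (g1, x1) (g2, x2) (g3, x3)
       = cobound1 (\<lambda>x y. x \<otimes>\<^bsub>G\<^esub> y) (hom_act F10 F11) \<alpha> g1 g2 (F10 (g1 \<otimes>\<^bsub>G\<^esub> g2) x3)"
proof -
  have "beta \<alpha> F10 (g1, x1) (sd_mult G F10 (g2, x2) (g3, x3))
      = \<alpha> g1 (F10 g1 x2) + \<alpha> g1 (F10 (g1 \<otimes>\<^bsub>G\<^esub> g2) x3)"
    using assms by (simp add: beta_def sd_mult_def additive.add)
  moreover have "hom_act F10 F11 g1 (\<alpha> g2) (F10 (g1 \<otimes>\<^bsub>G\<^esub> g2) x3) = F11 g1 (\<alpha> g2 (F10 g2 x3))"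
    using assms(2,4) by (simp add: hom_act_apply)
  ultimately show ?thesis
    by (simp add: cobound1_def cobound2_def sd_act_def sd_mult_def beta_def)
qed

theorem mainTheorem13:
  fixes G :: "('g, 'b) monoid_scheme"
    and F10 :: "'g \<Rightarrow> 'v0::real_vector \<Rightarrow> 'v0"
    and F11 :: "'g \<Rightarrow> 'v1::real_vector \<Rightarrow> 'v1"
    and F2bar :: "'g \<Rightarrow> 'g \<Rightarrow> 'v0 \<Rightarrow> 'v1"
    and \<alpha> :: "'g \<Rightarrow> 'v0 \<Rightarrow> 'v1"
  assumes grp: "group G"
    and F10_GL: "\<forall>g\<in>carrier G. linear (F10 g) \<and> bij (F10 g)"
    and F11_GL: "\<forall>g\<in>carrier G. linear (F11 g) \<and> bij (F11 g)"
    and F10_hom: "\<forall>g\<in>carrier G. \<forall>h\<in>carrier G. F10 (g \<otimes>\<^bsub>G\<^esub> h) = F10 g \<circ> F10 h"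
    and F11_hom: "\<forall>g\<in>carrier G. \<forall>h\<in>carrier G. F11 (g \<otimes>\<^bsub>G\<^esub> h) = F11 g \<circ> F11 h"
    and F2bar_Hom: "\<forall>g1\<in>carrier G. \<forall>g2\<in>carrier G. linear (F2bar g1 g2)"
    and \<alpha>_Hom: "\<forall>g\<in>carrier G. linear (\<alpha> g)"
    and F2bar_exact: "\<forall>g1\<in>carrier G. \<forall>g2\<in>carrier G.
       F2bar g1 g2 = cobound1 (\<lambda>x y. x \<otimes>\<^bsub>G\<^esub> y) (hom_act F10 F11) \<alpha> g1 g2"
  shows "\<forall>p\<in>carrier G \<times> UNIV. \<forall>q\<in>carrier G \<times> UNIV. \<forall>r\<in>carrier G \<times> UNIV.
       F2tilde G F10 F2bar p q r = cobound2 (sd_mult G F10) (sd_act F11) (beta \<alpha> F10) p q r"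
proof (intro ballI)
  fix p q r :: "'g \<times> 'v0"
  assume "p \<in> carrier G \<times> UNIV" and "q \<in> carrier G \<times> UNIV"
  then obtain g1 x1 g2 x2 where p: "p = (g1, x1)" and q: "q = (g2, x2)"
    and g1: "g1 \<in> carrier G" and g2: "g2 \<in> carrier G" by auto
  obtain g3 x3 where r: "r = (g3, x3)" by (cases r)
  have "additive (F10 g1)" "inj (F10 g1)" "additive (\<alpha> g1)"
    using F10_GL \<alpha>_Hom g1 by (auto intro: additive.intro linear_add bij_is_inj)
  moreover have "F10 (g1 \<otimes>\<^bsub>G\<^esub> g2) = F10 g1 \<circ> F10 g2"
    using F10_hom g1 g2 by blast
  ultimately have "cobound2 (sd_mult G F10) (sd_act F11) (beta \<alpha> F10) p q r
      = F2bar g1 g2 (F10 (g1 \<otimes>\<^bsub>G\<^esub> g2) x3)"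
    using F2bar_exact g1 g2 by (simp add: p q r cobound2_beta_sd del: comp_apply)
  then show "F2tilde G F10 F2bar p q r = cobound2 (sd_mult G F10) (sd_act F11) (beta \<alpha> F10) p q r"
    by (simp add: F2tilde_def F2_def p q r)
qed

end
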